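(* Let $X\in\sigma\mathcal F$ and $F\in\mathsf{age}(X)$ with $\mathsf{rk}_X(F)=\alpha$ for some ordinal $\alpha<\infty$. If $\beta<\alpha$, then there is $E\in\mathsf{age}(X)$ with $\mathsf{rk}_X(E)=\beta$.
   Context: Let $\mathcal L$ be a countable relational language without constants and $\mathcal F$ a hereditary, isomorphism-closed class of finite $\mathcal L$-structures. $\sigma\mathcal F$ is the class of countable structures isomorphic to unions of chains in $\mathcal F$; $\mathsf{age}(X)$ is the set of finite (induced) substructures of $X$. For $A\le B$, $B$ is a prime extension of $A$ if $|B\setminus A|=1$; a realization of $B$ in $X$ (where $A\le X$) is $C\le X$ with $A\le C$ and an isomorphism $B\to C$ fixing $A$ pointwise. For $F\in\mathsf{age}(X)$ define by recursion: $\mathsf{rk}_X(F)\ge0$ always; $\mathsf{rk}_X(F)\ge\alpha+1$ iff every prime extension $B\in\mathcal F$ of $F$ has a realization $C$ in $X$ with $\mathsf{rk}_X(C)\ge\alpha$; for limit $\alpha$, $\mathsf{rk}_X(F)\ge\alpha$ iff $\mathsf{rk}_X(F)\ge\beta$ for all $\beta<\alpha$. $\mathsf{rk}_X(F)=\sup\{\alpha:\mathsf{rk}_X(F)\ge\alpha\}$, with value $\infty$ (larger than every ordinal) if $\mathsf{rk}_X(F)\ge\alpha$ for every ordinal $\alpha$. *)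

theory Defs
  imports Main "HOL-Library.Countable"
begin

text \<open>A relational language: relation symbols of a countable type 'r with arities
  given by ar.  There are no constant or function symbols.  All structures have
  universes contained in nat (X is countable; finite structures are taken up to
  isomorphism, and nat has room for every finite structure and its prime extensions).\<close>

record 'r struc =
  univ :: "nat set"
  rels :: "'r \<Rightarrow> nat list \<Rightarrow> bool"

definition wf_struc :: "('r \<Rightarrow> nat) \<Rightarrow> 'r struc \<Rightarrow> bool" where
  "wf_struc ar A \<longleftrightarrow> (\<forall>r xs. rels A r xs \<longrightarrow> length xs = ar r \<and> set xs \<subseteq> univ A)"

definition substr :: "('r \<Rightarrow> nat) \<Rightarrow> 'r struc \<Rightarrow> 'r struc \<Rightarrow> bool" where
  "substr ar A B \<longleftrightarrow> wf_struc ar A \<and> wf_struc ar B \<and> univ A \<subseteq> univ B \<and>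
     (\<forall>r xs. set xs \<subseteq> univ A \<longrightarrow> (rels A r xs \<longleftrightarrow> rels B r xs))"

definition iso :: "('r \<Rightarrow> nat) \<Rightarrow> 'r struc \<Rightarrow> 'r struc \<Rightarrow> (nat \<Rightarrow> nat) \<Rightarrow> bool" where
  "iso ar A B f \<longleftrightarrow> wf_struc ar A \<and> wf_struc ar B \<and> bij_betw f (univ A) (univ B) \<and>
     (\<forall>r xs. set xs \<subseteq> univ A \<longrightarrow> (rels A r xs \<longleftrightarrow> rels B r (map f xs)))"

definition isomorphic :: "('r \<Rightarrow> nat) \<Rightarrow> 'r struc \<Rightarrow> 'r struc \<Rightarrow> bool" where
  "isomorphic ar A B \<longleftrightarrow> (\<exists>f. iso ar A B f)"

definition good_class :: "('r \<Rightarrow> nat) \<Rightarrow> 'r struc set \<Rightarrow> bool" where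
  "good_class ar \<F> \<longleftrightarrow>
     (\<forall>A\<in>\<F>. wf_struc ar A \<and> finite (univ A)) \<and>
     (\<forall>A\<in>\<F>. \<forall>B. substr ar B A \<longrightarrow> B \<in> \<F>) \<and>
     (\<forall>A\<in>\<F>. \<forall>B. isomorphic ar A B \<longrightarrow> B \<in> \<F>)"

definition chain_union :: "'r struc set \<Rightarrow> 'r struc" where
  "chain_union C = \<lparr>univ = (\<Union>A\<in>C. univ A), rels = (\<lambda>r xs. \<exists>A\<in>C. rels A r xs)\<rparr>"

definition is_chain :: "('r \<Rightarrow> nat) \<Rightarrow> 'r struc set \<Rightarrow> bool" where
  "is_chain ar C \<longleftrightarrow> (\<forall>A\<in>C. \<forall>B\<in>C. substr ar A B \<or> substr ar B A)"

text \<open>\<sigma>\<F>: countable structures isomorphic to unions of chains in \<F>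
  (countability is automatic since universes are subsets of nat).\<close>
definition sigma_class :: "('r \<Rightarrow> nat) \<Rightarrow> 'r struc set \<Rightarrow> 'r struc set" where
  "sigma_class ar \<F> = {X. \<exists>C. C \<subseteq> \<F> \<and> is_chain ar C \<and> isomorphic ar (chain_union C) X}"

definition age :: "('r \<Rightarrow> nat) \<Rightarrow> 'r struc \<Rightarrow> 'r struc set" where
  "age ar X = {F. substr ar F X \<and> finite (univ F)}"

definition prime_ext :: "('r \<Rightarrow> nat) \<Rightarrow> 'r struc \<Rightarrow> 'r struc \<Rightarrow> bool" where
  "prime_ext ar A B \<longleftrightarrow> substr ar A B \<and> card (univ B - univ A) = 1"

definition realization :: "('r \<Rightarrow> nat) \<Rightarrow> 'r struc \<Rightarrow> 'r struc \<Rightarrow> 'r struc \<Rightarrow> 'r struc \<Rightarrow> bool" where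
  "realization ar X A B C \<longleftrightarrow> substr ar C X \<and> substr ar A C \<and>
     (\<exists>f. iso ar B C f \<and> (\<forall>x\<in>univ A. f x = x))"

text \<open>Ordinals are modelled by the elements of an arbitrary well-ordered type 'o.
  gamma is the immediate successor of alpha:\<close>
definition is_succ :: "'o::wellorder \<Rightarrow> 'o \<Rightarrow> bool" where
  "is_succ \<alpha> \<gamma> \<longleftrightarrow> \<alpha> < \<gamma> \<and> (\<forall>\<delta>. \<alpha> < \<delta> \<longrightarrow> \<gamma> \<le> \<delta>)"

text \<open>rk_ge ar \<F> X \<alpha> F means rk_X(F) \<ge> \<alpha>, by recursion on \<alpha>:
  \<alpha> = 0 and limit \<alpha>: rk \<ge> \<beta> for all \<beta> < \<alpha>;
  \<alpha> = \<gamma>+1: every prime extension B \<in> \<F> of F has a realization C in X with rk \<ge> \<gamma>.\<close>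
function rk_ge :: "('r \<Rightarrow> nat) \<Rightarrow> 'r struc set \<Rightarrow> 'r struc \<Rightarrow> 'o::wellorder \<Rightarrow> 'r struc \<Rightarrow> bool" where
  "rk_ge ar \<F> X \<alpha> F \<longleftrightarrow> F \<in> age ar X \<and>
     (\<forall>\<gamma>\<in>{..<\<alpha>}. is_succ \<gamma> \<alpha> \<longrightarrow>
        (\<forall>B\<in>\<F>. prime_ext ar F B \<longrightarrow> (\<exists>C. realization ar X F B C \<and> rk_ge ar \<F> X \<gamma> C))) \<and>
     ((\<nexists>\<gamma>. is_succ \<gamma> \<alpha>) \<longrightarrow> (\<forall>\<beta>\<in>{..<\<alpha>}. rk_ge ar \<F> X \<beta> F))"
  by auto
termination
  by (relation "inv_image {(x, y). x < y} (\<lambda>(_, _, _, \<alpha>, _). \<alpha>)") (auto intro: wf)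

definition rk_eq :: "('r \<Rightarrow> nat) \<Rightarrow> 'r struc set \<Rightarrow> 'r struc \<Rightarrow> 'o::wellorder \<Rightarrow> 'r struc \<Rightarrow> bool" where
  "rk_eq ar \<F> X \<alpha> F \<longleftrightarrow> rk_ge ar \<F> X \<alpha> F \<and> (\<exists>\<gamma>. is_succ \<alpha> \<gamma> \<and> \<not> rk_ge ar \<F> X \<gamma> F)"

end

theory Submission
  imports Defs
begin

text \<open>Ranks are downward closed: rk_X(F) \<ge> \<alpha> implies rk_X(F) \<ge> \<beta> for \<beta> \<le> \<alpha>.
  If rk_X(F) = \<alpha>, then rk_X(F) \<ge> \<alpha> + 1 fails, so some prime extension B of F
  has no realization of rank \<ge> \<alpha>; but rk_X(F) \<ge> \<beta> + 1, so B has a realization C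
  of rank \<ge> \<beta>. Hence \<beta> \<le> rk_X(C) < \<alpha>, and induction on \<alpha> finishes the proof.\<close>

declare rk_ge.simps[simp del]

lemma is_succ_less:
  fixes \<alpha> \<gamma> :: "'o::wellorder"
  shows "is_succ \<alpha> \<gamma> \<Longrightarrow> \<alpha> < \<gamma>"
  unfolding is_succ_def by blast

lemma is_succ_le:
  fixes \<alpha> \<beta> \<gamma> :: "'o::wellorder"
  shows "is_succ \<alpha> \<gamma> \<Longrightarrow> \<alpha> < \<beta> \<Longrightarrow> \<gamma> \<le> \<beta>"
  unfolding is_succ_def by blast

lemma is_succ_unique:
  fixes \<alpha> \<beta> \<gamma> :: "'o::wellorder"
  assumes "is_succ \<alpha> \<gamma>" and "is_succ \<beta> \<gamma>"
  shows "\<alpha> = \<beta>"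
  using assms unfolding is_succ_def by (metis linorder_neqE not_le)

lemma is_succ_Least:
  fixes \<alpha> \<beta> :: "'o::wellorder"
  assumes "\<alpha> < \<beta>"
  shows "is_succ \<alpha> (LEAST \<gamma>. \<alpha> < \<gamma>)"
  unfolding is_succ_def using LeastI[of "\<lambda>\<gamma>. \<alpha> < \<gamma>", OF assms] by (auto intro: Least_le)

lemma rk_ge_imp_age: "rk_ge ar \<F> X \<alpha> F \<Longrightarrow> F \<in> age ar X"
  by (subst (asm) rk_ge.simps) blast

lemma rk_ge_succ_iff:
  fixes \<alpha> \<gamma> :: "'o::wellorder"
  assumes "is_succ \<gamma> \<alpha>"
  shows "rk_ge ar \<F> X \<alpha> F \<longleftrightarrow> F \<in> age ar X \<and>
    (\<forall>B\<in>\<F>. prime_ext ar F B \<longrightarrow> (\<exists>C. realization ar X F B C \<and> rk_ge ar \<F> X \<gamma> C))"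
  using assms is_succ_less[OF assms] is_succ_unique[OF _ assms]
  by (subst rk_ge.simps) blast

lemma rk_ge_nonsucc_iff:
  fixes \<alpha> :: "'o::wellorder"
  assumes "\<nexists>\<gamma>. is_succ \<gamma> \<alpha>"
  shows "rk_ge ar \<F> X \<alpha> F \<longleftrightarrow> F \<in> age ar X \<and> (\<forall>\<beta><\<alpha>. rk_ge ar \<F> X \<beta> F)"
  using assms by (subst rk_ge.simps) auto

lemma rk_ge_antimono:
  fixes \<alpha> \<beta> :: "'o::wellorder"
  shows "rk_ge ar \<F> X \<alpha> F \<Longrightarrow> \<beta> \<le> \<alpha> \<Longrightarrow> rk_ge ar \<F> X \<beta> F"
proof (induction \<beta> arbitrary: \<alpha> F rule: less_induct)
  case (less \<beta>)
  have F_age: "F \<in> age ar X"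
    using less.prems(1) by (rule rk_ge_imp_age)
  show ?case
  proof (cases "\<beta> = \<alpha>")
    case True
    with less.prems(1) show ?thesis by simp
  next
    case False
    with less.prems(2) have "\<beta> < \<alpha>" by simp
    show ?thesis
    proof (cases "\<exists>\<delta>. is_succ \<delta> \<beta>")
      case True
      then obtain \<delta> where \<delta>: "is_succ \<delta> \<beta>" by blast
      have \<delta>_less: "\<delta> < \<beta>" using \<delta> by (rule is_succ_less)
      have "\<exists>C. realization ar X F B C \<and> rk_ge ar \<F> X \<delta> C"
        if B: "B \<in> \<F>" "prime_ext ar F B" for B
      proof (cases "\<exists>\<gamma>. is_succ \<gamma> \<alpha>")
        case True
        then obtain \<gamma> where \<gamma>: "is_succ \<gamma> \<alpha>" by blast
        have "\<beta> \<le> \<gamma>"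
          using is_succ_le[OF \<gamma>] \<open>\<beta> < \<alpha>\<close> by (meson not_le)
        obtain C where "realization ar X F B C" "rk_ge ar \<F> X \<gamma> C"
          using less.prems(1) B unfolding rk_ge_succ_iff[OF \<gamma>] by blast
        moreover have "rk_ge ar \<F> X \<delta> C"
          using less.IH[OF \<delta>_less \<open>rk_ge ar \<F> X \<gamma> C\<close>] \<delta>_less \<open>\<beta> \<le> \<gamma>\<close> by simp
        ultimately show ?thesis by blast
      next
        case False
        have "rk_ge ar \<F> X \<beta> F"
          using less.prems(1) \<open>\<beta> < \<alpha>\<close> unfolding rk_ge_nonsucc_iff[OF False] by blast
        then show ?thesis
          using B unfolding rk_ge_succ_iff[OF \<delta>] by blast
      qed
      then show ?thesis
        unfolding rk_ge_succ_iff[OF \<delta>] using F_age by blast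
    next
      case False
      have "rk_ge ar \<F> X \<beta>' F" if "\<beta>' < \<beta>" for \<beta>'
        using less.IH[OF that less.prems(1)] that \<open>\<beta> < \<alpha>\<close> by simp
      then show ?thesis
        unfolding rk_ge_nonsucc_iff[OF False] using F_age by blast
    qed
  qed
qed

lemma rk_eq_le:
  fixes \<beta> \<eta> :: "'o::wellorder"
  assumes "rk_eq ar \<F> X \<eta> F" and "rk_ge ar \<F> X \<beta> F"
  shows "\<beta> \<le> \<eta>"
proof (rule ccontr)
  assume "\<not> \<beta> \<le> \<eta>"
  obtain \<gamma> where \<gamma>: "is_succ \<eta> \<gamma>" and "\<not> rk_ge ar \<F> X \<gamma> F"
    using assms(1) unfolding rk_eq_def by blast
  moreover have "\<gamma> \<le> \<beta>"
    using is_succ_le[OF \<gamma>] \<open>\<not> \<beta> \<le> \<eta>\<close> by simp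
  ultimately show False
    using rk_ge_antimono[OF assms(2)] by blast
qed

lemma not_rk_ge_imp_rk_eq_less:
  fixes \<delta> :: "'o::wellorder"
  assumes "F \<in> age ar X" and "\<not> rk_ge ar \<F> X \<delta> F"
  shows "\<exists>\<eta><\<delta>. rk_eq ar \<F> X \<eta> F"
proof -
  define \<delta>\<^sub>0 where "\<delta>\<^sub>0 = (LEAST \<delta> :: 'o. \<not> rk_ge ar \<F> X \<delta> F)"
  have fails: "\<not> rk_ge ar \<F> X \<delta>\<^sub>0 F"
    unfolding \<delta>\<^sub>0_def using assms(2) by (rule LeastI)
  have "\<delta>\<^sub>0 \<le> \<delta>"
    unfolding \<delta>\<^sub>0_def using assms(2) by (rule Least_le)
  have below: "rk_ge ar \<F> X \<eta> F" if "\<eta> < \<delta>\<^sub>0" for \<eta>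
    using not_less_Least that unfolding \<delta>\<^sub>0_def by blast
  \<comment> \<open>At 0 or a limit, rk_ge only asks for rk_ge below, so the least failing ordinal is a successor.\<close>
  obtain \<eta> where \<eta>: "is_succ \<eta> \<delta>\<^sub>0"
    using rk_ge_nonsucc_iff[of \<delta>\<^sub>0] assms(1) below fails by blast
  have "\<eta> < \<delta>\<^sub>0" using \<eta> by (rule is_succ_less)
  then have "rk_eq ar \<F> X \<eta> F"
    unfolding rk_eq_def using below \<eta> fails by blast
  then show ?thesis
    using \<open>\<eta> < \<delta>\<^sub>0\<close> \<open>\<delta>\<^sub>0 \<le> \<delta>\<close> by (meson less_le_trans)
qed

lemma rk_eq_ex_rank_between:
  fixes \<alpha> \<beta> :: "'o::wellorder"
  assumes "rk_eq ar \<F> X \<alpha> F" and "\<beta> < \<alpha>"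
  shows "\<exists>C\<in>age ar X. rk_ge ar \<F> X \<beta> C \<and> \<not> rk_ge ar \<F> X \<alpha> C"
proof -
  obtain \<gamma> where \<gamma>: "is_succ \<alpha> \<gamma>" and not_ge_\<gamma>: "\<not> rk_ge ar \<F> X \<gamma> F"
    and ge_\<alpha>: "rk_ge ar \<F> X \<alpha> F"
    using assms(1) unfolding rk_eq_def by blast
  obtain B where B: "B \<in> \<F>" "prime_ext ar F B"
    and no_high: "\<And>C. realization ar X F B C \<Longrightarrow> \<not> rk_ge ar \<F> X \<alpha> C"
    using not_ge_\<gamma> rk_ge_imp_age[OF ge_\<alpha>] unfolding rk_ge_succ_iff[OF \<gamma>] by blast
  define \<sigma> where "\<sigma> = (LEAST \<sigma>. \<beta> < \<sigma>)"
  have \<sigma>: "is_succ \<beta> \<sigma>"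
    unfolding \<sigma>_def using assms(2) by (rule is_succ_Least)
  have "rk_ge ar \<F> X \<sigma> F"
    using rk_ge_antimono[OF ge_\<alpha> is_succ_le[OF \<sigma> assms(2)]] .
  then obtain C where "realization ar X F B C" and "rk_ge ar \<F> X \<beta> C"
    using B unfolding rk_ge_succ_iff[OF \<sigma>] by blast
  with no_high rk_ge_imp_age show ?thesis by blast
qed

lemma rk_eq_downward_closed:
  fixes \<alpha> \<beta> :: "'o::wellorder"
  shows "rk_eq ar \<F> X \<alpha> F \<Longrightarrow> \<beta> < \<alpha> \<Longrightarrow> \<exists>E\<in>age ar X. rk_eq ar \<F> X \<beta> E"
proof (induction \<alpha> arbitrary: F rule: less_induct)
  case (less \<alpha>)
  obtain C where C_age: "C \<in> age ar X"
    and ge_\<beta>: "rk_ge ar \<F> X \<beta> C" and not_ge_\<alpha>: "\<not> rk_ge ar \<F> X \<alpha> C"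
    using rk_eq_ex_rank_between[OF less.prems] by blast
  obtain \<eta> where "\<eta> < \<alpha>" and \<eta>: "rk_eq ar \<F> X \<eta> C"
    using not_rk_ge_imp_rk_eq_less[OF C_age not_ge_\<alpha>] by blast
  have "\<beta> \<le> \<eta>" using \<eta> ge_\<beta> by (rule rk_eq_le)
  then consider "\<beta> = \<eta>" | "\<beta> < \<eta>" by fastforce
  then show ?case
  proof cases
    case 1
    with C_age \<eta> show ?thesis by blast
  next
    case 2
    with less.IH[OF \<open>\<eta> < \<alpha>\<close> \<eta>] show ?thesis .
  qed
qed

theorem proposition2p12:
  fixes ar :: "'r::countable \<Rightarrow> nat" and \<F> :: "'r struc set" and X F :: "'r struc"
    and \<alpha> \<beta> :: "'o::wellorder"
  assumes "good_class ar \<F>"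
    and "X \<in> sigma_class ar \<F>"
    and "F \<in> age ar X"
    and "rk_eq ar \<F> X \<alpha> F"
    and "\<beta> < \<alpha>"
  shows "\<exists>E \<in> age ar X. rk_eq ar \<F> X \<beta> E"
  using assms(4,5) by (rule rk_eq_downward_closed)

end
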